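(* Let $F$ be a closed convex subset of a real Hilbert space $\mathcal H$ and let $(T_n)_{n\ge0}$ be an $F$-coherent sequence in $\mathcal U_F$. Then: (i) If $F\neq\emptyset$, then for every $\varepsilon\in(0,1]$ and every $x_0\in\mathcal H$, the sequence $x_{n+1}=x_n+(2-\varepsilon)(T_nx_n-x_n)$ converges weakly to a point of $F$. (ii) For $x_0\in\mathcal H$, consider the iteration $x_{n+1}=Q(x_0,x_n,T_nx_n)$, which terminates at step $n$ if $H(x_0,x_n)\cap H(x_n,T_nx_n)=\emptyset$. Exactly one of the following holds: (a) $F\neq\emptyset$ and $x_n\to P_Fx_0$ strongly; (b) $F=\emptyset$ and $\|x_n\|\to+\infty$; (c) $F=\emptyset$ and the iteration terminates.
   Context: For $x,y\in\mathcal H$, $H(x,y)=\{z\in\mathcal H:\ \langle z-y,x-y\rangle\le0\}$; $Q(x,y,z)$ is the metric projection of $x$ onto $H(x,y)\cap H(y,z)$. $\mathcal U_F$ is the set of maps $T:\mathcal H\to\mathcal H$ with $F\subset H(x,Tx)$ for every $x\in\mathcal H$. A sequence $(T_n)\subset\mathcal U_F$ is $F$-coherent if for every bounded sequence $(z_n)$ in $\mathcal H$ with $\sum_n\|z_{n+1}-z_n\|^2<\infty$ and $\sum_n\|z_n-T_nz_n\|^2<\infty$, every weak cluster point of $(z_n)$ lies in $F$. $P_F$ is the metric projection onto $F$. *)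

theory Defs
  imports "HOL-Analysis.Analysis"
begin

definition halfsp :: "'a::real_inner \<Rightarrow> 'a \<Rightarrow> 'a set" where
  "halfsp x y = {z. inner (z - y) (x - y) \<le> 0}"

text \<open>Metric projection of x onto S (the unique nearest point; used for closed convex nonempty S).\<close>
definition proj :: "'a::real_normed_vector set \<Rightarrow> 'a \<Rightarrow> 'a" where
  "proj S x = (THE p. p \<in> S \<and> (\<forall>y\<in>S. norm (x - p) \<le> norm (x - y)))"

definition Qmap :: "'a::real_inner \<Rightarrow> 'a \<Rightarrow> 'a \<Rightarrow> 'a" where
  "Qmap x y z = proj (halfsp x y \<inter> halfsp y z) x"

definition UF :: "'a::real_inner set \<Rightarrow> ('a \<Rightarrow> 'a) set" where
  "UF F = {T. \<forall>x. F \<subseteq> halfsp x (T x)}"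

definition weak_conv :: "(nat \<Rightarrow> 'a::real_inner) \<Rightarrow> 'a \<Rightarrow> bool" where
  "weak_conv u p \<longleftrightarrow> (\<forall>y. (\<lambda>n. inner (u n) y) \<longlonglongrightarrow> inner p y)"

definition weak_cluster_point :: "(nat \<Rightarrow> 'a::real_inner) \<Rightarrow> 'a \<Rightarrow> bool" where
  "weak_cluster_point u p \<longleftrightarrow> (\<exists>r. strict_mono r \<and> weak_conv (u \<circ> r) p)"

definition coherent :: "'a::real_inner set \<Rightarrow> (nat \<Rightarrow> 'a \<Rightarrow> 'a) \<Rightarrow> bool" where
  "coherent F T \<longleftrightarrow> (\<forall>n. T n \<in> UF F) \<and>
     (\<forall>z. bounded (range z) \<and> summable (\<lambda>n. (norm (z (Suc n) - z n))\<^sup>2)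
          \<and> summable (\<lambda>n. (norm (z n - T n (z n)))\<^sup>2)
          \<longrightarrow> (\<forall>p. weak_cluster_point z p \<longrightarrow> p \<in> F))"

end

theory Submission
  imports Defs "HOL-Library.Diagonal_Subsequence"
begin

(*
  Part (i): each relaxed step is Fejer monotone with respect to F and its squared
  step lengths are summable, so coherence puts all weak cluster points in F and
  Opial's lemma applies.
  Part (ii) (Haugazeau's scheme, developed in two locales): F stays inside every cut
  H(x0,x_n) \<inter> H(x_n,T_n x_n), so termination forces F to be empty; otherwise
  ||x_n - x0||^2 increases with summable increments, which gives weak cluster points
  in F whenever it is bounded.  This yields unboundedness when F is empty and, when F
  is nonempty, strong convergence to P_F x0 by comparing ||x_n - x0|| with
  ||P_F x0 - x0||.
*)

lemma norm_diff_sq: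
  fixes a b :: "'a::real_inner"
  shows "(norm (a - b))^2 = (norm a)^2 - 2 * inner a b + (norm b)^2"
  by (simp add: power2_norm_eq_inner inner_diff_left inner_diff_right inner_commute)

lemma norm_add_sq:
  fixes a b :: "'a::real_inner"
  shows "(norm (a + b))^2 = (norm a)^2 + 2 * inner a b + (norm b)^2"
  by (simp add: power2_norm_eq_inner inner_add_left inner_add_right inner_commute)

lemma parallelogram_midpoint:
  fixes a b :: "'a::real_inner"
  shows "(norm (a - b))^2 = 2*(norm a)^2 + 2*(norm b)^2 - 4*(norm ((1/2) *\<^sub>R (a + b)))^2"
  by (simp add: power2_norm_eq_inner inner_diff_left inner_diff_right inner_add_left
      inner_add_right inner_commute algebra_simps)

lemma convex_near_minimizers_close:
  fixes S :: "'a::real_inner set"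
  assumes "convex S" "y \<in> S" "z \<in> S" "\<And>w. w \<in> S \<Longrightarrow> d \<le> norm (x - w)" "0 \<le> d"
  shows "(norm (y - z))^2 \<le> 2 * ((norm (x - y))^2 - d^2) + 2 * ((norm (x - z))^2 - d^2)"
proof -
  have mid: "(1/2) *\<^sub>R (y + z) \<in> S"
    using convexD[OF assms(1-3), of "1/2" "1/2"] by (simp add: scaleR_add_right)
  have "d^2 \<le> (norm (x - (1/2) *\<^sub>R (y + z)))^2"
    using assms(4)[OF mid] assms(5) by (simp add: power_mono)
  moreover have "x - (1/2) *\<^sub>R (y + z) = (1/2) *\<^sub>R ((x - z) + (x - y))"
    by (simp add: algebra_simps flip: scaleR_add_left)
  moreover have "y - z = (x - z) - (x - y)" by simp
  ultimately show ?thesis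
    using parallelogram_midpoint[of "x - z" "x - y"] by simp
qed

lemma Cauchy_if_sq_dist_le:
  fixes y :: "nat \<Rightarrow> 'a::metric_space"
  assumes "\<And>m n. (dist (y m) (y n))^2 \<le> e m + e n" and "e \<longlonglongrightarrow> 0"
  shows "Cauchy y"
proof (rule metric_CauchyI)
  fix \<epsilon> :: real assume "\<epsilon> > 0"
  then have "\<forall>\<^sub>F n in sequentially. e n < \<epsilon>^2 / 2"
    by (intro order_tendstoD(2)[OF assms(2)]) simp
  then obtain N where N: "\<And>n. n \<ge> N \<Longrightarrow> e n < \<epsilon>^2 / 2"
    by (auto simp: eventually_sequentially)
  show "\<exists>M. \<forall>m\<ge>M. \<forall>n\<ge>M. dist (y m) (y n) < \<epsilon>"
  proof (intro exI allI impI)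
    fix m n assume "N \<le> m" "N \<le> n"
    then have "(dist (y m) (y n))^2 < \<epsilon>^2" using assms(1)[of m n] N[of m] N[of n] by linarith
    then show "dist (y m) (y n) < \<epsilon>" using \<open>\<epsilon> > 0\<close> by (simp add: power_less_imp_less_base)
  qed
qed

(* Existence of a nearest point: a minimizing sequence is Cauchy by the estimate above. *)
lemma nearest_point_exists:
  fixes S :: "'a::{real_inner,complete_space} set"
  assumes "closed S" "convex S" "S \<noteq> {}"
  shows "\<exists>p\<in>S. \<forall>y\<in>S. norm (x - p) \<le> norm (x - y)"
proof -
  define d where "d = infdist x S"
  have d0: "0 \<le> d" by (simp add: d_def infdist_nonneg)
  have d_le: "d \<le> norm (x - w)" if "w \<in> S" for w
    using infdist_le[OF that, of x] by (simp add: d_def dist_norm)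
  have "\<exists>y\<in>S. norm (x - y) < d + inverse (Suc n)" for n
  proof -
    have "(INF w\<in>S. dist x w) < d + inverse (Suc n)"
      using infdist_notempty[OF assms(3), of x] by (simp add: d_def)
    then obtain w where "w \<in> S" "dist x w < d + inverse (Suc n)"
      using cINF_less_iff[OF assms(3) bdd_below_image_dist] by blast
    then show ?thesis by (auto simp: dist_norm)
  qed
  then obtain y where yS: "\<And>n. y n \<in> S" and yd: "\<And>n. norm (x - y n) < d + inverse (Suc n)"
    by metis
  have dist_lim: "(\<lambda>n. norm (x - y n)) \<longlonglongrightarrow> d"
  proof (rule tendsto_sandwich)
    show "\<forall>\<^sub>F n in sequentially. d \<le> norm (x - y n)" using d_le yS by simp
    show "\<forall>\<^sub>F n in sequentially. norm (x - y n) \<le> d + inverse (Suc n)" using yd by (simp add: less_imp_le)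
    show "(\<lambda>n. d + inverse (real (Suc n))) \<longlonglongrightarrow> d"
      using tendsto_add[OF tendsto_const LIMSEQ_inverse_real_of_nat, of d] by simp
  qed simp
  have "Cauchy y"
  proof (rule Cauchy_if_sq_dist_le)
    show "(dist (y m) (y n))^2 \<le> 2 * ((norm (x - y m))^2 - d^2) + 2 * ((norm (x - y n))^2 - d^2)"
      for m n using convex_near_minimizers_close[OF assms(2) yS yS d_le d0] by (simp add: dist_norm)
    have "(\<lambda>n. 2 * ((norm (x - y n))^2 - d^2)) \<longlonglongrightarrow> 2 * (d^2 - d^2)"
      by (intro tendsto_intros dist_lim)
    then show "(\<lambda>n. 2 * ((norm (x - y n))^2 - d^2)) \<longlonglongrightarrow> 0" by simp
  qed
  then obtain p where py: "y \<longlonglongrightarrow> p"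
    using Cauchy_convergent unfolding convergent_def by blast
  have "p \<in> S" using closed_sequentially[OF assms(1)] yS py by blast
  moreover have "(\<lambda>n. norm (x - y n)) \<longlonglongrightarrow> norm (x - p)" by (intro tendsto_intros py)
  then have "norm (x - p) = d" using dist_lim LIMSEQ_unique by blast
  ultimately show ?thesis using d_le by auto
qed

(* The nearest point is unique, again by the midpoint estimate. *)
lemma nearest_point_unique:
  fixes S :: "'a::real_inner set"
  assumes "convex S" "p \<in> S" "q \<in> S"
    and "\<forall>y\<in>S. norm (x - p) \<le> norm (x - y)" "\<forall>y\<in>S. norm (x - q) \<le> norm (x - y)"
  shows "p = q"
proof -
  have "norm (x - p) = norm (x - q)" using assms(2-5) by (meson order_antisym)
  then have "(norm (p - q))^2 \<le> 0"
    using convex_near_minimizers_close[OF assms(1-3), of "norm (x - p)" x] assms(4) by simp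
  then show ?thesis by simp
qed

lemma proj_nearest:
  fixes S :: "'a::{real_inner,complete_space} set"
  assumes "closed S" "convex S" "S \<noteq> {}"
  shows "proj S x \<in> S \<and> (\<forall>y\<in>S. norm (x - proj S x) \<le> norm (x - y))"
proof -
  obtain p where p: "p \<in> S" "\<forall>y\<in>S. norm (x - p) \<le> norm (x - y)"
    using nearest_point_exists[OF assms] by blast
  have "\<exists>!p. p \<in> S \<and> (\<forall>y\<in>S. norm (x - p) \<le> norm (x - y))"
    using p nearest_point_unique[OF assms(2)] by blast
  then show ?thesis unfolding proj_def by (rule theI')
qed

lemma nonpos_if_le_small_multiples:
  fixes c a :: real
  assumes "\<And>t. 0 < t \<Longrightarrow> t \<le> 1 \<Longrightarrow> 2*c \<le> t * a" "a \<ge> 0"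
  shows "c \<le> 0"
proof (rule ccontr)
  assume "\<not> c \<le> 0"
  then have c: "c > 0" by simp
  define t where "t = min 1 (c/(a+1))"
  have t: "0 < t" "t \<le> 1" using c assms(2) by (auto simp: t_def)
  have "t * a \<le> c/(a+1) * a" using assms(2) by (intro mult_right_mono) (auto simp: t_def)
  also have "\<dots> < c" using c assms(2) by (simp add: field_simps)
  finally show False using assms(1)[OF t] c by linarith
qed

lemma nearest_point_obtuse:
  fixes S :: "'a::real_inner set"
  assumes "convex S" "p \<in> S" "\<forall>y\<in>S. norm (x - p) \<le> norm (x - y)" "y \<in> S"
  shows "inner (x - p) (y - p) \<le> 0"
proof (rule nonpos_if_le_small_multiples)
  fix t :: real assume t: "0 < t" "t \<le> 1"
  have z: "(1 - t) *\<^sub>R p + t *\<^sub>R y \<in> S" using convexD[OF assms(1) assms(2) assms(4)] t by simp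
  have eq: "x - ((1 - t) *\<^sub>R p + t *\<^sub>R y) = (x - p) - t *\<^sub>R (y - p)" by (simp add: algebra_simps)
  have "norm (x - p) \<le> norm (x - ((1 - t) *\<^sub>R p + t *\<^sub>R y))" using assms(3) z by blast
  then have "(norm (x - p))^2 \<le> (norm ((x - p) - t *\<^sub>R (y - p)))^2"
    unfolding eq by (simp add: power_mono)
  also have "\<dots> = (norm (x - p))^2 - 2 * t * inner (x - p) (y - p) + t^2 * (norm (y - p))^2"
    by (subst norm_diff_sq) (simp add: power_mult_distrib power2_abs)
  finally have "2 * t * inner (x - p) (y - p) \<le> t * (t * (norm (y - p))^2)"
    by (simp add: power2_eq_square algebra_simps)
  then show "2 * inner (x - p) (y - p) \<le> t * (norm (y - p))^2" using t
    by (metis mult.assoc mult_le_cancel_left_pos mult.left_commute)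
qed simp

lemma proj_obtuse:
  fixes S :: "'a::{real_inner,complete_space} set"
  assumes "closed S" "convex S" "S \<noteq> {}"
  shows "proj S x \<in> S \<and> (\<forall>y\<in>S. inner (x - proj S x) (y - proj S x) \<le> 0)"
  using proj_nearest[OF assms] nearest_point_obtuse[OF assms(2)] by blast

lemma proj_subspace_orthogonal:
  fixes M :: "'a::{real_inner,complete_space} set"
  assumes "subspace M" "closed M" "y \<in> M"
  shows "inner (x - proj M x) y = 0"
proof -
  note pv = proj_obtuse[OF assms(2) subspace_imp_convex[OF assms(1)], of x]
  have "proj M x + y \<in> M" "proj M x - y \<in> M"
    using pv assms(1,3) by (auto intro: subspace_add subspace_diff)
  then have "inner (x - proj M x) (proj M x + y - proj M x) \<le> 0"
    "inner (x - proj M x) (proj M x - y - proj M x) \<le> 0"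
    using pv assms(3) by blast+
  then show ?thesis by (simp add: inner_diff_right)
qed

(* Riesz representation: every bounded linear functional on a Hilbert space is an
   inner product with a fixed vector (a normal to its kernel, found by projection). *)
lemma riesz_representation:
  fixes L :: "'a::{real_inner,complete_space} \<Rightarrow> real"
  assumes "bounded_linear L"
  shows "\<exists>p. \<forall>w. L w = inner p w"
proof (cases "\<forall>w. L w = 0")
  case True then show ?thesis by (intro exI[of _ 0]) simp
next
  case False
  then obtain w0 where w0: "L w0 \<noteq> 0" by blast
  interpret L: bounded_linear L by (rule assms)
  define N where "N = {w. L w = 0}"
  have subN: "subspace N" unfolding subspace_def N_def by (simp add: L.add L.scaleR)
  have clN: "closed N" unfolding N_def
    by (intro closed_Collect_eq continuous_on_const linear_continuous_on assms)
  define z where "z = w0 - proj N w0"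
  have "proj N w0 \<in> N"
    using proj_obtuse[OF clN subspace_imp_convex[OF subN]] subspace_0[OF subN] by blast
  then have Lz: "L z = L w0" by (simp add: z_def L.diff N_def)
  have perp: "inner z y = 0" if "y \<in> N" for y
    using proj_subspace_orthogonal[OF subN clN that] by (simp add: z_def)
  have zz: "inner z z \<noteq> 0" using Lz w0 L.zero by auto
  show ?thesis
  proof (intro exI allI)
    fix w
    define c where "c = L w / L z"
    have "w - c *\<^sub>R z \<in> N" using Lz w0 by (simp add: N_def L.diff L.scaleR c_def)
    then have "inner z (w - c *\<^sub>R z) = 0" by (rule perp)
    then have "inner z w = c * inner z z" by (simp add: inner_diff_right)
    then show "L w = inner ((L z / inner z z) *\<^sub>R z) w" using zz Lz w0 by (simp add: c_def)
  qed
qed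

lemma bounded_diagonal_inner_convergent:
  fixes u :: "nat \<Rightarrow> 'a::real_inner"
  assumes "bounded (range u)"
  shows "\<exists>r. strict_mono r \<and> (\<forall>k. convergent (\<lambda>n. inner (u (r n)) (u k)))"
proof -
  obtain B where B: "\<And>n. norm (u n) \<le> B" using assms unfolding bounded_iff by blast
  interpret subseqs "\<lambda>k s. convergent (\<lambda>n. inner (u (s n)) (u k))"
  proof
    fix k and s :: "nat \<Rightarrow> nat"
    have "norm (inner (u (s n)) (u k)) \<le> B * norm (u k)" for n
      using Cauchy_Schwarz_ineq2[of "u (s n)" "u k"] mult_right_mono[OF B[of "s n"] norm_ge_zero[of "u k"]]
      by simp
    then have "bounded (range (\<lambda>n. inner (u (s n)) (u k)))" unfolding bounded_iff by blast
    then obtain l r' where "strict_mono r'" "((\<lambda>n. inner (u (s n)) (u k)) \<circ> r') \<longlonglongrightarrow> l"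
      using bounded_imp_convergent_subsequence by blast
    then show "\<exists>r'. strict_mono r' \<and> convergent (\<lambda>n. inner (u ((s \<circ> r') n)) (u k))"
      by (auto simp: convergent_def o_def)
  qed
  have "convergent (\<lambda>n. inner (u (diagseq n)) (u k))" for k
  proof -
    have "convergent (\<lambda>n. inner (u ((diagseq \<circ> (+) (Suc k)) n)) (u k))"
    proof (rule diagseq_holds)
      fix s r :: "nat \<Rightarrow> nat" and m
      assume "strict_mono r" "convergent (\<lambda>n. inner (u (s n)) (u m))"
      then show "convergent (\<lambda>n. inner (u ((s \<circ> r) n)) (u m))"
        using LIMSEQ_subseq_LIMSEQ[of "\<lambda>n. inner (u (s n)) (u m)" _ r]
        unfolding convergent_def by (auto simp: o_def)
    qed
    then obtain l where "(\<lambda>n. inner (u (diagseq (n + Suc k))) (u k)) \<longlonglongrightarrow> l"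
      unfolding convergent_def by (auto simp: o_def add.commute)
    then have "(\<lambda>n. inner (u (diagseq n)) (u k)) \<longlonglongrightarrow> l" by (rule LIMSEQ_offset)
    then show ?thesis by (auto simp: convergent_def)
  qed
  then show ?thesis using subseq_diagseq by blast
qed

definition convergent_directions :: "(nat \<Rightarrow> 'a::real_inner) \<Rightarrow> 'a set" where
  "convergent_directions v = {w. convergent (\<lambda>n. inner (v n) w)}"

lemma convergent_directions_subspace: "subspace (convergent_directions v)"
  unfolding subspace_def convergent_directions_def
proof (intro conjI ballI allI; clarsimp simp: convergent_def)
  fix a b la lb assume "(\<lambda>n. inner (v n) a) \<longlonglongrightarrow> la" "(\<lambda>n. inner (v n) b) \<longlonglongrightarrow> lb"
  then have "(\<lambda>n. inner (v n) a + inner (v n) b) \<longlonglongrightarrow> la + lb" by (rule tendsto_add)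
  then show "\<exists>L. (\<lambda>n. inner (v n) (a + b)) \<longlonglongrightarrow> L" by (auto simp: inner_add_right)
next
  fix c a la assume "(\<lambda>n. inner (v n) a) \<longlonglongrightarrow> la"
  then have "(\<lambda>n. c * inner (v n) a) \<longlonglongrightarrow> c * la" by (rule tendsto_mult_left)
  then show "\<exists>L. (\<lambda>n. c * inner (v n) a) \<longlonglongrightarrow> L" by blast
qed (rule exI, rule tendsto_const)

lemma convergent_directions_closed:
  fixes v :: "nat \<Rightarrow> 'a::real_inner"
  assumes "bounded (range v)"
  shows "closed (convergent_directions v)"
  unfolding closed_sequential_limits
proof (intro allI impI)
  obtain B where B: "B > 0" "\<And>n. norm (v n) \<le> B" using assms unfolding bounded_pos by blast
  fix w l assume wl: "(\<forall>n. w n \<in> convergent_directions v) \<and> w \<longlonglongrightarrow> l"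
  have "Cauchy (\<lambda>n. inner (v n) l)"
  proof (rule metric_CauchyI)
    fix e :: real assume e: "e > 0"
    obtain j where j: "norm (w j - l) < e / (3 * B)"
      using wl e B(1) unfolding LIMSEQ_iff by (metis divide_pos_pos zero_less_mult_iff
          zero_less_numeral order_refl norm_minus_commute)
    have "Cauchy (\<lambda>n. inner (v n) (w j))"
      using wl by (intro convergent_Cauchy) (simp add: convergent_directions_def)
    then obtain M where M: "\<And>m n. m \<ge> M \<Longrightarrow> n \<ge> M \<Longrightarrow> dist (inner (v m) (w j)) (inner (v n) (w j)) < e/3"
      using e unfolding Cauchy_def by (meson zero_less_divide_iff zero_less_numeral)
    have close: "\<bar>inner (v m) l - inner (v m) (w j)\<bar> < e/3" for m
    proof -
      have "\<bar>inner (v m) l - inner (v m) (w j)\<bar> = \<bar>inner (v m) (l - w j)\<bar>" by (simp add: inner_diff_right)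
      also have "\<dots> \<le> norm (v m) * norm (l - w j)" by (rule Cauchy_Schwarz_ineq2)
      also have "\<dots> \<le> B * norm (w j - l)" using B(2)[of m] by (simp add: mult_right_mono norm_minus_commute)
      also have "\<dots> < B * (e / (3 * B))" by (rule mult_strict_left_mono[OF j B(1)])
      also have "\<dots> = e/3" using B(1) by simp
      finally show ?thesis .
    qed
    show "\<exists>M. \<forall>m\<ge>M. \<forall>n\<ge>M. dist (inner (v m) l) (inner (v n) l) < e"
    proof (intro exI allI impI)
      fix m n assume "M \<le> m" "M \<le> n"
      from M[OF this] close[of m] close[of n]
      show "dist (inner (v m) l) (inner (v n) l) < e" unfolding dist_real_def by arith
    qed
  qed
  then show "l \<in> convergent_directions v" by (simp add: convergent_directions_def Cauchy_convergent_iff)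
qed

(* If the convergent directions contain the sequence itself, they are everything:
   what is orthogonal to the sequence trivially lies in them. *)
lemma convergent_directions_UNIV:
  fixes v :: "nat \<Rightarrow> 'a::{real_inner,complete_space}"
  assumes "bounded (range v)" and "range v \<subseteq> convergent_directions v"
  shows "convergent_directions v = UNIV"
proof -
  let ?C = "convergent_directions v"
  note sub = convergent_directions_subspace[of v] and cl = convergent_directions_closed[OF assms(1)]
  have "w \<in> ?C" for w
  proof -
    have pC: "proj ?C w \<in> ?C"
      using proj_obtuse[OF cl subspace_imp_convex[OF sub]] assms(2) by blast
    have "inner (v n) (w - proj ?C w) = 0" for n
      using proj_subspace_orthogonal[OF sub cl, of "v n" w] assms(2) by (auto simp: inner_commute)
    then have "w - proj ?C w \<in> ?C" by (simp add: convergent_directions_def convergent_const)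
    then have "proj ?C w + (w - proj ?C w) \<in> ?C" using pC sub by (intro subspace_add) auto
    then show ?thesis by simp
  qed
  then show ?thesis by blast
qed

(* A bounded sequence whose inner products with every vector converge is weakly
   convergent: the limit functional is bounded linear, hence represented by Riesz. *)
lemma weak_limit_exists:
  fixes v :: "nat \<Rightarrow> 'a::{real_inner,complete_space}"
  assumes "bounded (range v)" and "\<And>w. convergent (\<lambda>n. inner (v n) w)"
  shows "\<exists>p. weak_conv v p"
proof -
  obtain B where B: "\<And>n. norm (v n) \<le> B" using assms(1) unfolding bounded_iff by blast
  define L where "L w = lim (\<lambda>n. inner (v n) w)" for w
  have hL: "(\<lambda>n. inner (v n) w) \<longlonglongrightarrow> L w" for w
    using assms(2)[of w] by (simp add: L_def convergent_LIMSEQ_iff)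
  have "bounded_linear L"
  proof (rule bounded_linear_intro)
    fix a b
    have "(\<lambda>n. inner (v n) (a + b)) \<longlonglongrightarrow> L a + L b"
      using tendsto_add[OF hL[of a] hL[of b]] by (simp add: inner_add_right)
    then show "L (a + b) = L a + L b" using hL[of "a + b"] by (rule LIMSEQ_unique[rotated])
  next
    fix c a
    have "(\<lambda>n. inner (v n) (c *\<^sub>R a)) \<longlonglongrightarrow> c *\<^sub>R L a"
      using tendsto_mult_left[OF hL[of a], of c] by simp
    then show "L (c *\<^sub>R a) = c *\<^sub>R L a" using hL[of "c *\<^sub>R a"] by (rule LIMSEQ_unique[rotated])
  next
    fix a
    have "\<bar>inner (v n) a\<bar> \<le> B * norm a" for n
      using Cauchy_Schwarz_ineq2[of "v n" a] mult_right_mono[OF B[of n] norm_ge_zero[of a]] by simp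
    then have "\<bar>L a\<bar> \<le> B * norm a"
      by (intro tendsto_le[OF sequentially_bot tendsto_const tendsto_rabs[OF hL]]) simp
    then show "norm (L a) \<le> norm a * B" by (simp add: mult.commute)
  qed
  then obtain p where "\<And>w. L w = inner p w" using riesz_representation by blast
  then have "weak_conv v p" unfolding weak_conv_def using hL by simp
  then show ?thesis by blast
qed

lemma bounded_weakly_convergent_subseq:
  fixes u :: "nat \<Rightarrow> 'a::{real_inner,complete_space}"
  assumes "bounded (range u)"
  shows "\<exists>r p. strict_mono r \<and> weak_conv (u \<circ> r) p"
proof -
  obtain r where r: "strict_mono r" "\<And>k. convergent (\<lambda>n. inner (u (r n)) (u k))"
    using bounded_diagonal_inner_convergent[OF assms] by blast
  have bd: "bounded (range (u \<circ> r))" using assms by (rule bounded_subset) auto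
  have "range (u \<circ> r) \<subseteq> convergent_directions (u \<circ> r)"
    using r(2) by (auto simp: convergent_directions_def)
  then have "convergent (\<lambda>n. inner ((u \<circ> r) n) w)" for w
    using convergent_directions_UNIV[OF bd] by (auto simp: convergent_directions_def)
  then obtain p where "weak_conv (u \<circ> r) p" using weak_limit_exists[OF bd] by blast
  then show ?thesis using r(1) by blast
qed

lemma weak_cluster_pointI: "strict_mono r \<Longrightarrow> weak_conv (x \<circ> r) p \<Longrightarrow> weak_cluster_point x p"
  unfolding weak_cluster_point_def by blast

lemma bounded_weak_cluster_point:
  fixes x :: "nat \<Rightarrow> 'a::{real_inner,complete_space}"
  assumes "bounded (range x)"
  shows "\<exists>p. weak_cluster_point x p"
  using bounded_weakly_convergent_subseq[OF assms] weak_cluster_pointI by blast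

(* Two weak cluster points p, q coincide if the distances of the sequence to p and to q
   converge: then the inner products with q - p converge, and both limits agree. *)
lemma weak_cluster_point_unique:
  fixes x :: "nat \<Rightarrow> 'a::real_inner"
  assumes "convergent (\<lambda>n. (norm (x n - p))^2)" "convergent (\<lambda>n. (norm (x n - q))^2)"
    and "weak_cluster_point x p" "weak_cluster_point x q"
  shows "p = q"
proof -
  have expand: "2 * inner (x n) (q - p) = (norm (x n - p))^2 - (norm (x n - q))^2 + (norm q)^2 - (norm p)^2" for n
    by (simp add: power2_norm_eq_inner inner_diff_left inner_diff_right inner_commute)
  obtain lp lq where lp: "(\<lambda>n. (norm (x n - p))^2) \<longlonglongrightarrow> lp"
    and lq: "(\<lambda>n. (norm (x n - q))^2) \<longlonglongrightarrow> lq"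
    using assms(1,2) unfolding convergent_def by blast
  define c where "c = lp - lq + (norm q)^2 - (norm p)^2"
  have c: "(\<lambda>n. 2 * inner (x n) (q - p)) \<longlonglongrightarrow> c"
    unfolding expand c_def by (intro tendsto_intros lp lq)
  have at_cluster: "2 * inner z (q - p) = c" if z: "weak_cluster_point x z" for z
  proof -
    obtain r where r: "strict_mono r" "weak_conv (x \<circ> r) z"
      using z unfolding weak_cluster_point_def by blast
    have "(\<lambda>n. 2 * inner (x (r n)) (q - p)) \<longlonglongrightarrow> c"
      using LIMSEQ_subseq_LIMSEQ[OF c r(1)] by (simp add: o_def)
    moreover have "(\<lambda>n. 2 * inner (x (r n)) (q - p)) \<longlonglongrightarrow> 2 * inner z (q - p)"
      using r(2) by (intro tendsto_mult_left) (simp add: weak_conv_def o_def)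
    ultimately show ?thesis using LIMSEQ_unique by blast
  qed
  have "inner (q - p) (q - p) = 0"
    using at_cluster[OF assms(3)] at_cluster[OF assms(4)] by (simp add: inner_diff_left)
  then show ?thesis by simp
qed

lemma opial:
  fixes x :: "nat \<Rightarrow> 'a::{real_inner,complete_space}" and F :: "'a set"
  assumes bd: "bounded (range x)"
    and cluster: "\<And>q. weak_cluster_point x q \<Longrightarrow> q \<in> F"
    and conv: "\<And>q. q \<in> F \<Longrightarrow> convergent (\<lambda>n. (norm (x n - q))^2)"
  shows "\<exists>p\<in>F. weak_conv x p"
proof -
  obtain p where p: "weak_cluster_point x p" using bounded_weak_cluster_point[OF bd] by blast
  have pF: "p \<in> F" by (rule cluster[OF p])
  have "weak_conv x p" unfolding weak_conv_def
  proof (rule allI, rule ccontr)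
    fix y assume "\<not> (\<lambda>n. inner (x n) y) \<longlonglongrightarrow> inner p y"
    then obtain e where e: "e > 0" "\<not> eventually (\<lambda>n. dist (inner (x n) y) (inner p y) < e) sequentially"
      unfolding tendsto_iff by blast
    obtain s :: "nat \<Rightarrow> nat" where s: "strict_mono s" "\<And>n. e \<le> dist (inner (x (s n)) y) (inner p y)"
      using not_eventually_sequentiallyD[OF e(2)] by (auto simp: not_less)
    have "bounded (range (x \<circ> s))" using bd by (rule bounded_subset) auto
    then obtain r q where r: "strict_mono r" "weak_conv (x \<circ> s \<circ> r) q"
      using bounded_weakly_convergent_subseq by blast
    have q: "weak_cluster_point x q"
      using weak_cluster_pointI[OF strict_mono_o[OF s(1) r(1)]] r(2) by (simp add: o_assoc)
    have "p = q" by (rule weak_cluster_point_unique[OF conv[OF pF] conv[OF cluster[OF q]] p q])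
    have "(\<lambda>n. dist (inner (x (s (r n))) y) (inner p y)) \<longlonglongrightarrow> dist (inner q y) (inner p y)"
      using r(2) by (intro tendsto_dist tendsto_const) (simp add: weak_conv_def o_def)
    then have "e \<le> dist (inner q y) (inner p y)"
      by (rule tendsto_le[OF sequentially_bot _ tendsto_const]) (simp add: s(2))
    then show False using \<open>p = q\<close> e(1) by simp
  qed
  then show ?thesis using pF by blast
qed

lemma weak_cluster_point_sq_dist_le:
  fixes x :: "nat \<Rightarrow> 'a::real_inner"
  assumes "weak_cluster_point x q" and "\<And>n. (norm (x n - c))^2 \<le> A"
  shows "(norm (q - c))^2 \<le> A"
proof -
  obtain r where r: "strict_mono r" "weak_conv (x \<circ> r) q"
    using assms(1) unfolding weak_cluster_point_def by blast
  have "(\<lambda>n. inner (x (r n)) (q - c)) \<longlonglongrightarrow> inner q (q - c)"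
    using r(2) by (simp add: weak_conv_def o_def)
  then have "(\<lambda>n. 2 * (inner (x (r n)) (q - c) - inner c (q - c))) \<longlonglongrightarrow> 2 * (inner q (q - c) - inner c (q - c))"
    by (intro tendsto_mult_left tendsto_diff tendsto_const)
  then have lim: "(\<lambda>n. 2 * inner (x (r n) - c) (q - c)) \<longlonglongrightarrow> 2 * inner (q - c) (q - c)"
    by (simp add: inner_diff_left)
  have "2 * inner (x (r n) - c) (q - c) \<le> A + (norm (q - c))^2" for n
  proof -
    have "0 \<le> (norm ((x (r n) - c) - (q - c)))^2" by simp
    then show ?thesis using assms(2)[of "r n"] unfolding norm_diff_sq by linarith
  qed
  then have "2 * inner (q - c) (q - c) \<le> A + (norm (q - c))^2"
    by (intro tendsto_le[OF sequentially_bot tendsto_const lim]) simp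
  then show ?thesis by (simp add: power2_norm_eq_inner)
qed

lemma halfsp_eq: "halfsp x y = {z. inner (x - y) z \<le> inner (x - y) y}"
  by (auto simp: halfsp_def inner_diff_left inner_commute)

lemma halfsp_closed: "closed (halfsp x y)"
  by (simp add: halfsp_eq closed_halfspace_le)

lemma halfsp_convex: "convex (halfsp x y)"
  by (simp add: halfsp_eq convex_halfspace_le)

lemma halfsp_self: "halfsp a a = UNIV"
  by (simp add: halfsp_def)

lemma halfsp_pythagoras:
  fixes a b c :: "'a::real_inner"
  assumes "c \<in> halfsp a b"
  shows "(norm (a - b))^2 + (norm (c - b))^2 \<le> (norm (c - a))^2"
proof -
  have "(norm (c - a))^2 = (norm (c - b))^2 - 2 * inner (c - b) (a - b) + (norm (a - b))^2"
    using norm_diff_sq[of "c - b" "a - b"] by simp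
  moreover have "inner (c - b) (a - b) \<le> 0" using assms by (simp add: halfsp_def)
  ultimately show ?thesis by linarith
qed

lemma Qmap_cut:
  fixes a b c :: "'a::{real_inner,complete_space}"
  assumes "halfsp a b \<inter> halfsp b c \<noteq> {}"
  shows "Qmap a b c \<in> halfsp a b \<inter> halfsp b c \<and> halfsp a b \<inter> halfsp b c \<subseteq> halfsp a (Qmap a b c)"
proof -
  have "closed (halfsp a b \<inter> halfsp b c)" "convex (halfsp a b \<inter> halfsp b c)"
    by (simp_all add: closed_Int halfsp_closed convex_Int halfsp_convex)
  from proj_obtuse[OF this assms, of a] show ?thesis
    by (auto simp: Qmap_def halfsp_def inner_commute)
qed

lemma coherent_cluster_point:
  assumes "coherent F T" "bounded (range z)" "summable (\<lambda>n. (norm (z (Suc n) - z n))^2)"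
    "summable (\<lambda>n. (norm (z n - T n (z n)))^2)" "weak_cluster_point z p"
  shows "p \<in> F"
  using assms unfolding coherent_def by blast

lemma summable_if_le_increments:
  fixes a b :: "nat \<Rightarrow> real"
  assumes "\<And>n. 0 \<le> b n" and "\<And>n. b n \<le> a (Suc n) - a n" and "\<And>n. a n \<le> K"
  shows "summable b"
proof (rule bounded_imp_summable[where B = "K - a 0"])
  fix n
  have "(\<Sum>k\<le>n. b k) \<le> (\<Sum>k\<le>n. a (Suc k) - a k)" by (rule sum_mono) (rule assms(2))
  also have "\<dots> = a (Suc n) - a 0"
    using sum_lessThan_telescope[of a "Suc n"] by (simp add: lessThan_Suc_atMost)
  finally show "(\<Sum>k\<le>n. b k) \<le> K - a 0" using assms(3)[of "Suc n"] by linarith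
qed (rule assms(1))

lemma bounded_range_if_sq_dist_le:
  fixes x :: "nat \<Rightarrow> 'a::real_normed_vector"
  assumes "\<And>n. (norm (x n - c))^2 \<le> K"
  shows "bounded (range x)"
proof -
  have "range x \<subseteq> cball c (sqrt K)"
    using assms real_le_rsqrt by (auto simp: dist_norm norm_minus_commute)
  then show ?thesis using bounded_cball bounded_subset by blast
qed

lemma nonincreasing_sq_dist:
  fixes x :: "nat \<Rightarrow> 'a::real_normed_vector"
  assumes "\<And>n. (norm (x (Suc n) - q))^2 \<le> (norm (x n - q))^2"
  shows "bounded (range x) \<and> convergent (\<lambda>n. (norm (x n - q))^2)"
proof -
  have dec: "decseq (\<lambda>n. (norm (x n - q))^2)" using assms by (rule decseq_SucI)
  then have le0: "(norm (x n - q))^2 \<le> (norm (x 0 - q))^2" for n by (simp add: decseq_def)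
  have "convergent (\<lambda>n. (norm (x n - q))^2)"
    using dec le0 by (intro Bseq_monoseq_convergent decseq_imp_monoseq BseqI'[of _ "(norm (x 0 - q))^2"]) auto
  then show ?thesis using bounded_range_if_sq_dist_le[of x q, OF le0] by blast
qed

lemma relaxed_step_fejer:
  fixes y t q :: "'a::real_inner"
  assumes "q \<in> halfsp y t" and "0 \<le> \<gamma>"
  shows "(norm (y + \<gamma> *\<^sub>R (t - y) - q))^2 + \<gamma> * (2 - \<gamma>) * (norm (t - y))^2 \<le> (norm (y - q))^2"
proof -
  have "inner (y - q) (t - y) = inner (q - t) (y - t) - (norm (t - y))^2"
    by (simp add: power2_norm_eq_inner inner_diff_left inner_diff_right inner_commute algebra_simps)
  moreover have "inner (q - t) (y - t) \<le> 0" using assms(1) by (simp add: halfsp_def)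
  ultimately have "\<gamma> * inner (y - q) (t - y) \<le> \<gamma> * - ((norm (t - y))^2)"
    using assms(2) by (intro mult_left_mono) auto
  moreover have "(norm (y + \<gamma> *\<^sub>R (t - y) - q))^2
      = (norm (y - q))^2 + 2 * (\<gamma> * inner (y - q) (t - y)) + \<gamma>^2 * (norm (t - y))^2"
  proof -
    have eq: "y + \<gamma> *\<^sub>R (t - y) - q = (y - q) + \<gamma> *\<^sub>R (t - y)" by simp
    show ?thesis unfolding eq norm_add_sq by (simp add: power_mult_distrib power2_abs)
  qed
  moreover have "\<gamma> * (2 - \<gamma>) * (norm (t - y))^2 = 2 * (\<gamma> * (norm (t - y))^2) - \<gamma>^2 * (norm (t - y))^2"
    by (simp add: algebra_simps power2_eq_square)
  ultimately show ?thesis by simp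
qed

theorem relaxed_iteration_weak_conv:
  fixes F :: "'a::{real_inner,complete_space} set" and T :: "nat \<Rightarrow> 'a \<Rightarrow> 'a"
  assumes coh: "coherent F T" and "F \<noteq> {}" and eps: "0 < \<epsilon>" "\<epsilon> \<le> 1"
    and iter: "\<And>n. x (Suc n) = x n + (2 - \<epsilon>) *\<^sub>R (T n (x n) - x n)"
  shows "\<exists>p\<in>F. weak_conv x p"
proof -
  define c where "c = (2 - \<epsilon>) * \<epsilon>"
  have c0: "c > 0" using eps by (simp add: c_def)
  have fejer: "(norm (x (Suc n) - q))^2 + c * (norm (T n (x n) - x n))^2 \<le> (norm (x n - q))^2"
    if "q \<in> F" for q n
  proof -
    have "q \<in> halfsp (x n) (T n (x n))" using coh that by (auto simp: coherent_def UF_def)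
    from relaxed_step_fejer[OF this, of "2 - \<epsilon>"] show ?thesis using eps by (simp add: iter c_def)
  qed
  have fejer_mono: "bounded (range x) \<and> convergent (\<lambda>n. (norm (x n - q))^2)" if "q \<in> F" for q
  proof (rule nonincreasing_sq_dist)
    fix n
    have "0 \<le> c * (norm (T n (x n) - x n))^2" using c0 by simp
    then show "(norm (x (Suc n) - q))^2 \<le> (norm (x n - q))^2" using fejer[OF that, of n] by linarith
  qed
  obtain q0 where q0: "q0 \<in> F" using \<open>F \<noteq> {}\<close> by blast
  have bd: "bounded (range x)" using fejer_mono[OF q0] by blast
  have steps: "summable (\<lambda>n. (norm (x n - T n (x n)))^2)"
  proof (rule summable_if_le_increments[where a = "\<lambda>n. - ((norm (x n - q0))^2) / c" and K = 0])
    show "(norm (x n - T n (x n)))^2 \<le> - ((norm (x (Suc n) - q0))^2) / c - (- ((norm (x n - q0))^2) / c)"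
      for n using fejer[OF q0, of n] c0 by (simp add: field_simps norm_minus_commute)
  qed (use c0 in auto)
  have moves: "summable (\<lambda>n. (norm (x (Suc n) - x n))^2)"
  proof -
    have step_len: "(norm (x (Suc n) - x n))^2 = (2 - \<epsilon>)^2 * (norm (x n - T n (x n)))^2" for n
      using eps by (simp add: iter power_mult_distrib norm_minus_commute)
    show ?thesis unfolding step_len by (rule summable_mult[OF steps])
  qed
  show ?thesis
    using opial[OF bd coherent_cluster_point[OF coh bd moves steps]] fejer_mono by blast
qed

locale haugazeau =
  fixes F :: "'a::{real_inner,complete_space} set" and T :: "nat \<Rightarrow> 'a \<Rightarrow> 'a"
    and x0 :: 'a and x :: "nat \<Rightarrow> 'a"
  assumes T_UF: "\<forall>n. T n \<in> UF F"
    and start: "x 0 = x0"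
    and iterate: "\<forall>n. halfsp x0 (x n) \<inter> halfsp (x n) (T n (x n)) \<noteq> {}
                        \<longrightarrow> x (Suc n) = Qmap x0 (x n) (T n (x n))"
begin

abbreviation cut :: "nat \<Rightarrow> 'a set" where
  "cut n \<equiv> halfsp x0 (x n) \<inter> halfsp (x n) (T n (x n))"

lemma cut_step:
  assumes "cut n \<noteq> {}"
  shows "x (Suc n) \<in> cut n \<and> cut n \<subseteq> halfsp x0 (x (Suc n))"
  using Qmap_cut[OF assms] iterate assms by simp

lemma F_in_cut: "(\<forall>m<n. cut m \<noteq> {}) \<Longrightarrow> F \<subseteq> cut n"
proof (induction n)
  case 0
  show ?case using T_UF by (auto simp: start halfsp_self UF_def)
next
  case (Suc n)
  then have "F \<subseteq> halfsp x0 (x (Suc n))" using cut_step[of n] by auto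
  then show ?case using T_UF by (auto simp: UF_def)
qed

lemma termination_imp_empty:
  assumes "cut n = {}"
  shows "F = {}"
proof -
  obtain k where "cut k = {}" "\<forall>m<k. cut m \<noteq> {}"
    using assms exists_least_iff[of "\<lambda>n. cut n = {}"] by blast
  then show ?thesis using F_in_cut[of k] by blast
qed

end

locale haugazeau_running = haugazeau +
  assumes running: "\<And>n. halfsp x0 (x n) \<inter> halfsp (x n) (T n (x n)) \<noteq> {}"
begin

lemma sq_dist_increment:
  "(norm (x n - x0))^2 + (norm (x (Suc n) - x n))^2 \<le> (norm (x (Suc n) - x0))^2"
  using halfsp_pythagoras[of "x (Suc n)" x0 "x n"] cut_step[OF running[of n]]
  by (simp add: norm_minus_commute)

lemma residual_le_step: "(norm (x n - T n (x n)))^2 \<le> (norm (x (Suc n) - x n))^2"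
proof -
  have "(norm (x n - T n (x n)))^2 + (norm (x (Suc n) - T n (x n)))^2 \<le> (norm (x (Suc n) - x n))^2"
    using halfsp_pythagoras[of "x (Suc n)" "x n" "T n (x n)"] cut_step[OF running[of n]] by auto
  then show ?thesis using zero_le_power2[of "norm (x (Suc n) - T n (x n))"] by linarith
qed

lemma sq_dist_incseq: "incseq (\<lambda>n. (norm (x n - x0))^2)"
proof (rule incseq_SucI)
  show "(norm (x n - x0))^2 \<le> (norm (x (Suc n) - x0))^2" for n
    using sq_dist_increment[of n] zero_le_power2[of "norm (x (Suc n) - x n)"] by linarith
qed

lemma cluster_in_F:
  assumes coh: "coherent F T" and K: "\<And>n. (norm (x n - x0))^2 \<le> K"
  shows "\<exists>q\<in>F. weak_cluster_point x q"
proof -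
  have bd: "bounded (range x)" using K by (rule bounded_range_if_sq_dist_le)
  have moves: "summable (\<lambda>n. (norm (x (Suc n) - x n))^2)"
    using sq_dist_increment K by (intro summable_if_le_increments[of _ "\<lambda>n. (norm (x n - x0))^2" K])
      (auto simp: algebra_simps)
  have steps: "summable (\<lambda>n. (norm (x n - T n (x n)))^2)"
    by (rule summable_comparison_test[OF _ moves]) (use residual_le_step in auto)
  obtain q where "weak_cluster_point x q" using bounded_weak_cluster_point[OF bd] by blast
  then show ?thesis using coherent_cluster_point[OF coh bd moves steps] by blast
qed

lemma F_sq_dist_gap:
  assumes "p \<in> F"
  shows "(norm (x n - x0))^2 + (norm (p - x n))^2 \<le> (norm (p - x0))^2"
  using halfsp_pythagoras[of p x0 "x n"] F_in_cut[of n] running assms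
  by (auto simp: norm_minus_commute)

(* Case F \<noteq> {}: ||x_n - x0||^2 increases to ||P_F x0 - x0||^2, forcing x_n \<rightarrow> P_F x0. *)
lemma strong_convergence:
  assumes coh: "coherent F T" and "closed F" "convex F" "F \<noteq> {}"
  shows "x \<longlonglongrightarrow> proj F x0"
proof -
  define p where "p = proj F x0"
  have pF: "p \<in> F" and p_near: "\<And>y. y \<in> F \<Longrightarrow> norm (x0 - p) \<le> norm (x0 - y)"
    using proj_nearest[OF assms(2-4), of x0] by (auto simp: p_def)
  define \<delta> where "\<delta> = (norm (p - x0))^2"
  have gap: "(norm (x n - p))^2 \<le> \<delta> - (norm (x n - x0))^2" for n
    using F_sq_dist_gap[OF pF, of n] by (simp add: \<delta>_def norm_minus_commute)
  then have le_\<delta>: "(norm (x n - x0))^2 \<le> \<delta>" for n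
    using gap[of n] zero_le_power2[of "norm (x n - p)"] by linarith
  define A where "A = (SUP n. (norm (x n - x0))^2)"
  have bdd: "bdd_above (range (\<lambda>n. (norm (x n - x0))^2))" using le_\<delta> by (intro bdd_aboveI2)
  have lim_A: "(\<lambda>n. (norm (x n - x0))^2) \<longlonglongrightarrow> A"
    unfolding A_def by (rule LIMSEQ_incseq_SUP[OF bdd sq_dist_incseq])
  have le_A: "(norm (x n - x0))^2 \<le> A" for n unfolding A_def by (rule cSUP_upper[OF _ bdd]) simp
  obtain q where "q \<in> F" "weak_cluster_point x q" using cluster_in_F[OF coh le_\<delta>] by blast
  then have "\<delta> \<le> (norm (q - x0))^2"
    using p_near[of q] by (simp add: \<delta>_def norm_minus_commute power_mono)
  also have "\<dots> \<le> A" by (rule weak_cluster_point_sq_dist_le[OF \<open>weak_cluster_point x q\<close> le_A])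
  finally have "A = \<delta>" using le_\<delta> unfolding A_def by (intro antisym cSUP_least) auto
  then have lim_gap: "(\<lambda>n. \<delta> - (norm (x n - x0))^2) \<longlonglongrightarrow> 0"
    using tendsto_diff[OF tendsto_const lim_A, of \<delta>] by simp
  have "(\<lambda>n. (norm (x n - p))^2) \<longlonglongrightarrow> 0"
    by (rule tendsto_sandwich[OF _ _ tendsto_const lim_gap]) (simp_all add: gap)
  then have "(\<lambda>n. norm (x n - p)) \<longlonglongrightarrow> 0"
    using tendsto_real_sqrt[of "\<lambda>n. (norm (x n - p))^2" 0] by simp
  then show ?thesis unfolding p_def[symmetric] by (simp add: LIM_zero_cancel tendsto_norm_zero_iff)
qed

(* Case F = {}: ||x_n - x0||^2 is increasing and cannot be bounded (a bound would give a
   point of F), so ||x_n|| \<rightarrow> \<infinity>. *)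
lemma norm_diverges:
  assumes coh: "coherent F T" and "F = {}"
  shows "filterlim (\<lambda>n. norm (x n)) at_top sequentially"
  unfolding filterlim_at_top
proof
  fix Z :: real
  have "\<not> (\<forall>n. (norm (x n - x0))^2 \<le> (max 0 (Z + norm x0))^2)"
    using cluster_in_F[OF coh] assms(2) by blast
  then obtain N where N: "(max 0 (Z + norm x0))^2 < (norm (x N - x0))^2" by (meson not_le)
  show "\<forall>\<^sub>F n in sequentially. Z \<le> norm (x n)"
    using eventually_ge_at_top[of N]
  proof (rule eventually_mono)
    fix n assume "N \<le> n"
    then have "(max 0 (Z + norm x0))^2 < (norm (x n - x0))^2"
      using N sq_dist_incseq by (auto simp: incseq_def intro: less_le_trans)
    then have "max 0 (Z + norm x0) < norm (x n - x0)" by (rule power_less_imp_less_base) simp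
    then show "Z \<le> norm (x n)" using norm_triangle_ineq4[of "x n" x0] by linarith
  qed
qed

end

theorem theorem10:
  fixes F :: "'a::{real_inner,complete_space} set"
    and T :: "nat \<Rightarrow> 'a \<Rightarrow> 'a"
  assumes "closed F" and "convex F"
    and "\<forall>n. T n \<in> UF F"
    and "coherent F T"
  shows "(F \<noteq> {} \<longrightarrow>
           (\<forall>\<epsilon>::real. \<forall>x0 x. 0 < \<epsilon> \<and> \<epsilon> \<le> 1 \<and> x 0 = x0 \<and>
              (\<forall>n. x (Suc n) = x n + (2 - \<epsilon>) *\<^sub>R (T n (x n) - x n))
              \<longrightarrow> (\<exists>p\<in>F. weak_conv x p)))
       \<and> (\<forall>x0 x. x 0 = x0 \<and>
            (\<forall>n. halfsp x0 (x n) \<inter> halfsp (x n) (T n (x n)) \<noteq> {}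
                  \<longrightarrow> x (Suc n) = Qmap x0 (x n) (T n (x n)))
          \<longrightarrow> (let term = (\<exists>n. halfsp x0 (x n) \<inter> halfsp (x n) (T n (x n)) = {});
                   a = (F \<noteq> {} \<and> \<not> term \<and> x \<longlonglongrightarrow> proj F x0);
                   b = (F = {} \<and> \<not> term \<and> filterlim (\<lambda>n. norm (x n)) at_top sequentially);
                   c = (F = {} \<and> term)
               in (a \<or> b \<or> c) \<and> \<not> (a \<and> b) \<and> \<not> (a \<and> c) \<and> \<not> (b \<and> c)))"
proof (intro conjI impI allI)
  fix \<epsilon> :: real and x0 and x :: "nat \<Rightarrow> 'a"
  assume "F \<noteq> {}" "0 < \<epsilon> \<and> \<epsilon> \<le> 1 \<and> x 0 = x0 \<and> (\<forall>n. x (Suc n) = x n + (2 - \<epsilon>) *\<^sub>R (T n (x n) - x n))"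
  then show "\<exists>p\<in>F. weak_conv x p" using relaxed_iteration_weak_conv[OF assms(4)] by blast
next
  fix x0 and x :: "nat \<Rightarrow> 'a"
  assume "x 0 = x0 \<and> (\<forall>n. halfsp x0 (x n) \<inter> halfsp (x n) (T n (x n)) \<noteq> {}
                  \<longrightarrow> x (Suc n) = Qmap x0 (x n) (T n (x n)))"
  then interpret haugazeau F T x0 x using assms(3) by unfold_locales auto
  have outcomes: "((\<exists>n. cut n = {}) \<longrightarrow> F = {})
      \<and> ((\<forall>n. cut n \<noteq> {}) \<and> F \<noteq> {} \<longrightarrow> x \<longlonglongrightarrow> proj F x0)
      \<and> ((\<forall>n. cut n \<noteq> {}) \<and> F = {} \<longrightarrow> filterlim (\<lambda>n. norm (x n)) at_top sequentially)"
  proof (intro conjI impI)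
    show "F = {}" if "\<exists>n. cut n = {}" using that termination_imp_empty by blast
  next
    assume run: "(\<forall>n. cut n \<noteq> {}) \<and> F \<noteq> {}"
    then interpret haugazeau_running F T x0 x by unfold_locales auto
    show "x \<longlonglongrightarrow> proj F x0" using strong_convergence[OF assms(4,1,2)] run by blast
  next
    assume run: "(\<forall>n. cut n \<noteq> {}) \<and> F = {}"
    then interpret haugazeau_running F T x0 x by unfold_locales auto
    show "filterlim (\<lambda>n. norm (x n)) at_top sequentially" using norm_diverges[OF assms(4)] run by blast
  qed
  then show "let term = (\<exists>n. cut n = {});
                 a = (F \<noteq> {} \<and> \<not> term \<and> x \<longlonglongrightarrow> proj F x0);
                 b = (F = {} \<and> \<not> term \<and> filterlim (\<lambda>n. norm (x n)) at_top sequentially);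
                 c = (F = {} \<and> term)
             in (a \<or> b \<or> c) \<and> \<not> (a \<and> b) \<and> \<not> (a \<and> c) \<and> \<not> (b \<and> c)"
    unfolding Let_def by blast
qed

end
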